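(* Consider the second-order map defined below. When there are only fundamentalists and extrapolators, i.e. $w^C=0$, the map admits $P_1$, with $\bar e=-\Omega\Delta y^{BP}$ and $\Delta\bar y=\Delta y^{BP}$, as its unique equilibrium. When chartists are present ($w^C>0$), the map also admits the equilibria $P_2$ and $P_3$, with $\bar e=-\Omega\Delta y^{BP}\pm\sqrt{w^C/w^F}$ and $\Delta\bar y=\Delta y^{BP}$.
   Context: The (log) exchange rate $e_t$ and the output growth rate $\Delta y_t$ evolve according to $$e_t=e_{t-1}+(\mu+\rho)\left[w^F\left(-\Omega\Delta y_{t-1}-e_{t-1}\right)^3+w^C\left(e_{t-1}+\Omega\Delta y_{t-1}\right)+w^E\left(e_{t-1}-e_{t-2}\right)\right],$$ $$\Delta y_t=\Delta y_{t-1}+w^{flex}\beta\left\{\Delta y^{BP}-\gamma\left[w^F\left(-\Omega\Delta y_{t-1}-e_{t-1}\right)^3+w^C\left(e_{t-1}+\Omega\Delta y_{t-1}\right)+w^E\left(e_{t-1}-e_{t-2}\right)\right]-\Delta y_{t-1}\right\},$$ where $\mu>0$, $\rho>0$, $0<\beta<1$, $0<\Omega<1$, $0<w^{flex}<1$, $\Delta y^{BP}\in\mathbb{R}$ is a constant, $\gamma=\frac{(1-\theta)(\mu+\rho)}{\theta\pi}>0$ with $\theta\in(0,1)$, $\pi>0$, and $w^F\in(0,1]$, $w^C,w^E\in[0,1)$ are the shares of fundamentalists, chartists and trend-extrapolators with $w^F+w^C+w^E=1$. An equilibrium is a pair $(\bar e,\Delta\bar y)$ such that $e_t=e_{t-1}=e_{t-2}=\bar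 e$ and $\Delta y_t=\Delta y_{t-1}=\Delta\bar y$ is a solution of the map. *)

theory Defs
  imports Complex_Main
begin

definition demand :: "real \<Rightarrow> real \<Rightarrow> real \<Rightarrow> real \<Rightarrow> real \<Rightarrow> real \<Rightarrow> real \<Rightarrow> real" where
  "demand wF wC wE \<Omega> e1 e2 dy1 =
     wF * (- \<Omega> * dy1 - e1) ^ 3 + wC * (e1 + \<Omega> * dy1) + wE * (e1 - e2)"

definition gam :: "real \<Rightarrow> real \<Rightarrow> real \<Rightarrow> real \<Rightarrow> real" where
  "gam \<theta> \<mu> \<rho> \<pi> = (1 - \<theta>) * (\<mu> + \<rho>) / (\<theta> * \<pi>)"

text \<open>New exchange rate e_t given e_{t-1} = e1, e_{t-2} = e2, Delta y_{t-1} = dy1.\<close>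
definition e_next :: "real \<Rightarrow> real \<Rightarrow> real \<Rightarrow> real \<Rightarrow> real \<Rightarrow> real \<Rightarrow> real \<Rightarrow> real \<Rightarrow> real \<Rightarrow> real" where
  "e_next \<mu> \<rho> wF wC wE \<Omega> e1 e2 dy1 = e1 + (\<mu> + \<rho>) * demand wF wC wE \<Omega> e1 e2 dy1"

definition dy_next :: "real \<Rightarrow> real \<Rightarrow> real \<Rightarrow> real \<Rightarrow> real \<Rightarrow> real \<Rightarrow> real \<Rightarrow> real \<Rightarrow> real \<Rightarrow> real
    \<Rightarrow> real \<Rightarrow> real \<Rightarrow> real \<Rightarrow> real \<Rightarrow> real" where
  "dy_next \<mu> \<rho> \<beta> \<Omega> wflex dyBP \<theta> \<pi> wF wC wE e1 e2 dy1 =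
     dy1 + wflex * \<beta> * (dyBP - gam \<theta> \<mu> \<rho> \<pi> * demand wF wC wE \<Omega> e1 e2 dy1 - dy1)"

definition is_equilibrium :: "real \<Rightarrow> real \<Rightarrow> real \<Rightarrow> real \<Rightarrow> real \<Rightarrow> real \<Rightarrow> real \<Rightarrow> real
    \<Rightarrow> real \<Rightarrow> real \<Rightarrow> real \<Rightarrow> real \<times> real \<Rightarrow> bool" where
  "is_equilibrium \<mu> \<rho> \<beta> \<Omega> wflex dyBP \<theta> \<pi> wF wC wE P \<longleftrightarrow>
     (case P of (e, dy) \<Rightarrow>
        e_next \<mu> \<rho> wF wC wE \<Omega> e e dy = e \<and>
        dy_next \<mu> \<rho> \<beta> \<Omega> wflex dyBP \<theta> \<pi> wF wC wE e e dy = dy)"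

end

theory Submission
  imports Defs
begin

text \<open>At a steady state e_t = e_{t-1} the trend-extrapolators' term vanishes, so the excess
  demand is the odd cubic x (w^C - w^F x^2) in the misalignment x = e + \<Omega> \<Delta>y. Equilibria are
  exactly the points where excess demand is zero and output growth sits at \<Delta>y^BP; the cubic
  has the roots 0 and \<plusminus>sqrt (w^C / w^F), which are distinct exactly when w^C > 0.\<close>

lemma demand_steady_state:
  "demand wF wC wE \<Omega> e e dy = (e + \<Omega> * dy) * (wC - wF * (e + \<Omega> * dy)^2)"
  unfolding demand_def by (simp add: power3_eq_cube power2_eq_square algebra_simps)

lemma is_equilibrium_iff:
  assumes "\<mu> + \<rho> \<noteq> 0" and "wflex * \<beta> \<noteq> 0"
  shows "is_equilibrium \<mu> \<rho> \<beta> \<Omega> wflex dyBP \<theta> \<pi> wF wC wE (e, dy) \<longleftrightarrow>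
    dy = dyBP \<and> demand wF wC wE \<Omega> e e dy = 0"
  using assms unfolding is_equilibrium_def e_next_def dy_next_def by auto

lemma odd_cubic_eq_0_iff:
  fixes a c x :: real
  assumes "a \<noteq> 0" and "0 \<le> c / a"
  shows "x * (c - a * x^2) = 0 \<longleftrightarrow> x \<in> {0, sqrt (c / a), - sqrt (c / a)}"
proof -
  have "c - a * x^2 = 0 \<longleftrightarrow> x^2 = (sqrt (c / a))^2"
    using assms by (auto simp: field_simps)
  then show ?thesis
    by (auto simp: power2_eq_iff)
qed

lemma equilibria_eq:
  assumes "\<mu> + \<rho> \<noteq> 0" and "wflex * \<beta> \<noteq> 0" and "wF \<noteq> 0" and "0 \<le> wC / wF"
  shows "{P. is_equilibrium \<mu> \<rho> \<beta> \<Omega> wflex dyBP \<theta> \<pi> wF wC wE P}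
    = {(- \<Omega> * dyBP, dyBP),
       (- \<Omega> * dyBP + sqrt (wC / wF), dyBP),
       (- \<Omega> * dyBP - sqrt (wC / wF), dyBP)}"
proof -
  have "is_equilibrium \<mu> \<rho> \<beta> \<Omega> wflex dyBP \<theta> \<pi> wF wC wE (e, dy) \<longleftrightarrow>
      dy = dyBP \<and> e + \<Omega> * dyBP \<in> {0, sqrt (wC / wF), - sqrt (wC / wF)}" for e dy
    unfolding is_equilibrium_iff[OF assms(1,2)] demand_steady_state
      odd_cubic_eq_0_iff[OF assms(3,4)] by blast
  then show ?thesis
    by (force simp: algebra_simps)
qed

theorem proposition4:
  fixes \<mu> \<rho> \<beta> \<Omega> wflex dyBP \<theta> \<pi> wF wC wE :: real
  assumes "\<mu> > 0" and "\<rho> > 0" and "0 < \<beta>" and "\<beta> < 1"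
    and "0 < \<Omega>" and "\<Omega> < 1" and "0 < wflex" and "wflex < 1"
    and "0 < \<theta>" and "\<theta> < 1" and "\<pi> > 0"
    and "0 < wF" and "wF \<le> 1" and "0 \<le> wC" and "wC < 1" and "0 \<le> wE" and "wE < 1"
    and "wF + wC + wE = 1"
  shows "(wC = 0 \<longrightarrow>
            {P. is_equilibrium \<mu> \<rho> \<beta> \<Omega> wflex dyBP \<theta> \<pi> wF wC wE P}
              = {(- \<Omega> * dyBP, dyBP)})
       \<and> (wC > 0 \<longrightarrow>
            {P. is_equilibrium \<mu> \<rho> \<beta> \<Omega> wflex dyBP \<theta> \<pi> wF wC wE P}
              = {(- \<Omega> * dyBP, dyBP),
                 (- \<Omega> * dyBP + sqrt (wC / wF), dyBP),
                 (- \<Omega> * dyBP - sqrt (wC / wF), dyBP)})"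
proof -
  have "{P. is_equilibrium \<mu> \<rho> \<beta> \<Omega> wflex dyBP \<theta> \<pi> wF wC wE P}
      = {(- \<Omega> * dyBP, dyBP),
         (- \<Omega> * dyBP + sqrt (wC / wF), dyBP),
         (- \<Omega> * dyBP - sqrt (wC / wF), dyBP)}"
    using assms by (intro equilibria_eq) auto
  then show ?thesis
    by auto
qed

end
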